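(* Let $A\subset\{1,2,3,\dots\}$ be a set whose natural density $d(A)=\lim_{n\to\infty}\#(A\cap[1,n])/n$ exists and satisfies $d(A)>0$. Let $F_A(s)=-\sum_{j\in A}\ln(1-e^{sj})$ for $s<0$. Then for every integer $m\ge0$, $$F_A^{(m)}(-s)\sim d(A)\,\zeta(2)\,\Gamma(m+1)\,\frac{1}{s^{m+1}},\quad\text{as } s\downarrow0.$$
   Context: $F_A$ is the fulcrum $s\mapsto\ln P_A(e^s)$ of $P_A(z)=\prod_{j\in A}(1-z^j)^{-1}$, the generating function of partitions with parts in $A$. $F_A^{(m)}$ is the $m$-th derivative. $\alpha(s)\sim\beta(s)$ means $\alpha(s)/\beta(s)\to1$. $\zeta$ is the Riemann zeta function and $\Gamma$ the Gamma function. *)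

theory Defs
  imports "HOL-Analysis.Analysis" "HOL-Library.Landau_Symbols"
begin

definition zeta_real :: "real \<Rightarrow> real" where
  "zeta_real s = (\<Sum>n. 1 / (real (Suc n)) powr s)"

definition fulcrum :: "nat set \<Rightarrow> real \<Rightarrow> real" where
  "fulcrum A s = - (\<Sum>j. if j \<in> A then ln (1 - exp (s * real j)) else 0)"

end

theory Submission
  imports Defs "HOL-Real_Asymp.Real_Asymp"
begin

(* Expanding the logarithms, F_A(s) = sum_{k >= 1} (1/k) sum_{j in A} exp (k j s), and differentiating
   termwise, x^(m+1) F_A^(m)(-x) = sum_{k >= 1} phi (k x) / k^2 with phi u = u^(m+1) sum_{j in A} j^m exp (-j u).
   An Abelian argument (summation by parts against the counting function of A) shows
   phi u --> d(A) m! as u --> 0+, and phi is bounded on (0, oo); by dominated convergence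
   (Tannery's theorem) the sum tends to d(A) m! zeta(2) = d(A) zeta(2) Gamma(m+1). *)

section \<open>Power series with polynomial weights\<close>

lemma binomial_power_series_sums:
  fixes z :: real
  assumes "0 \<le> z" "z < 1"
  shows "(\<lambda>n. real ((n + p) choose p) * z ^ n) sums (1 / (1 - z) ^ Suc p)"
proof (induction p)
  case 0
  then show ?case using geometric_sums[of z] assms by simp
next
  case (Suc p)
  have "summable (\<lambda>n. norm (real ((n + p) choose p) * z ^ n))"
    using Suc.IH assms by (simp add: sums_iff)
  moreover have "summable (\<lambda>n. norm (z ^ n))"
    using assms by (simp add: summable_geometric)
  ultimately have "(\<lambda>n. \<Sum>i\<le>n. (real ((i + p) choose p) * z ^ i) * z ^ (n - i)) sums
      ((\<Sum>n. real ((n + p) choose p) * z ^ n) * (\<Sum>n. z ^ n))"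
    by (rule Cauchy_product_sums)
  moreover have "(\<Sum>i\<le>n. (real ((i + p) choose p) * z ^ i) * z ^ (n - i))
      = real ((n + Suc p) choose Suc p) * z ^ n" for n
  proof -
    have sym: "(i + p) choose p = (p + i) choose i" for i
      using binomial_symmetric[of i "p + i"] by (simp add: add.commute)
    have "(\<Sum>i\<le>n. (real ((i + p) choose p) * z ^ i) * z ^ (n - i))
        = real (\<Sum>i\<le>n. (p + i) choose i) * z ^ n"
      unfolding of_nat_sum sum_distrib_right
      by (intro sum.cong refl) (simp add: sym mult.assoc flip: power_add)
    also have "(\<Sum>i\<le>n. (p + i) choose i) = Suc (p + n) choose n"
      by (rule sum_choose_lower)
    also have "\<dots> = (n + Suc p) choose Suc p"
      using binomial_symmetric[of n "Suc (p + n)"] by (simp add: add.commute)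
    finally show ?thesis .
  qed
  moreover have "(\<Sum>n. real ((n + p) choose p) * z ^ n) * (\<Sum>n. z ^ n) = 1 / (1 - z) ^ Suc (Suc p)"
    using Suc.IH geometric_sums[of z] assms by (simp add: sums_iff)
  ultimately show ?case by simp
qed

lemma power_le_fact_mult_binomial: "real (n + 1) ^ p \<le> fact p * real ((n + p) choose p)"
proof (induction p)
  case 0
  then show ?case by simp
next
  case (Suc p)
  have "real (n + 1) ^ Suc p \<le> real (n + Suc p) * (fact p * real ((n + p) choose p))"
    using Suc.IH by (simp add: mult_mono)
  also have "\<dots> = fact (Suc p) * real ((n + Suc p) choose Suc p)"
    using Suc_times_binomial_eq[of "n + p" p] by (simp add: algebra_simps flip: of_nat_mult)
  finally show ?case .
qed

lemma power_mult_geometric_series: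
  fixes z :: real
  assumes "0 \<le> z" "z < 1"
  shows "summable (\<lambda>n. real n ^ p * z ^ n)"
    and "(\<Sum>n. real n ^ p * z ^ n) \<le> fact p / (1 - z) ^ Suc p"
proof -
  have sums: "(\<lambda>n. fact p * (real ((n + p) choose p) * z ^ n)) sums (fact p * (1 / (1 - z) ^ Suc p))"
    by (intro sums_mult binomial_power_series_sums assms)
  have le: "real n ^ p * z ^ n \<le> fact p * (real ((n + p) choose p) * z ^ n)" for n
  proof -
    have "real n ^ p \<le> fact p * real ((n + p) choose p)"
      using power_le_fact_mult_binomial[of n p] power_mono[of "real n" "real (n + 1)" p] by simp
    then show ?thesis using assms by (simp add: mult.assoc[symmetric] mult_right_mono)
  qed
  show summable: "summable (\<lambda>n. real n ^ p * z ^ n)"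
    using assms le by (intro summable_comparison_test'[OF sums_summable[OF sums]]) auto
  have "(\<Sum>n. real n ^ p * z ^ n) \<le> (\<Sum>n. fact p * (real ((n + p) choose p) * z ^ n))"
    by (intro suminf_le summable sums_summable[OF sums] le)
  then show "(\<Sum>n. real n ^ p * z ^ n) \<le> fact p / (1 - z) ^ Suc p"
    using sums by (simp add: sums_iff)
qed

(* For m = 0 a term j = 0 would contribute 0^0 = 1, which is why A is kept inside {1..} below. *)
definition moment_series :: "nat set \<Rightarrow> nat \<Rightarrow> real \<Rightarrow> real" where
  "moment_series A m z = (\<Sum>j. indicator A j * real j ^ m * z ^ j)"

lemma summable_moment_series:
  fixes z :: real
  assumes "0 \<le> z" "z < 1"
  shows "summable (\<lambda>j. indicator A j * real j ^ m * z ^ j)"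
  using assms
  by (intro summable_comparison_test'[OF power_mult_geometric_series(1)[OF assms, of m]])
     (auto simp: indicator_def)

lemma moment_series_nonneg:
  fixes z :: real
  assumes "0 \<le> z" "z < 1"
  shows "0 \<le> moment_series A m z"
  unfolding moment_series_def using assms
  by (intro suminf_nonneg summable_moment_series) auto

lemma moment_series_mono:
  fixes z :: real
  assumes "A \<subseteq> B" "0 \<le> z" "z < 1"
  shows "moment_series A m z \<le> moment_series B m z"
  unfolding moment_series_def using assms
  by (intro suminf_le summable_moment_series) (auto simp: indicator_def)

lemma moment_series_atLeast1_le:
  fixes z :: real
  assumes "0 \<le> z" "z < 1"
  shows "moment_series {1..} m z \<le> z * fact m / (1 - z) ^ Suc m"
proof -
  define f where "f = (\<lambda>j. indicator {1..} j * real j ^ m * z ^ j)"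
  have summable: "summable f"
    unfolding f_def by (rule summable_moment_series[OF assms])
  have sums: "(\<lambda>n. z * fact m * (real ((n + m) choose m) * z ^ n))
      sums (z * fact m * (1 / (1 - z) ^ Suc m))"
    by (intro sums_mult binomial_power_series_sums assms)
  have le: "f (Suc n) \<le> z * fact m * (real ((n + m) choose m) * z ^ n)" for n
  proof -
    have "real (Suc n) ^ m * z ^ Suc n \<le> (fact m * real ((n + m) choose m)) * z ^ Suc n"
      using power_le_fact_mult_binomial[of n m] assms by (intro mult_right_mono) auto
    then show ?thesis by (simp add: f_def mult_ac)
  qed
  have "moment_series {1..} m z = (\<Sum>n. f (Suc n))"
    using suminf_split_head[OF summable] by (simp add: moment_series_def f_def)
  also have "\<dots> \<le> (\<Sum>n. z * fact m * (real ((n + m) choose m) * z ^ n))"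
    using summable by (intro suminf_le sums_summable[OF sums] le) (simp add: summable_Suc_iff)
  finally show ?thesis using sums by (simp add: sums_iff)
qed

lemma moment_series_atLeast1_ge:
  fixes z :: real
  assumes "0 \<le> z" "z < 1"
  shows "z ^ Suc m * fact m / (1 - z) ^ Suc m \<le> moment_series {1..} m z"
proof -
  define f where "f = (\<lambda>j. indicator {1..} j * real j ^ m * z ^ j)"
  have summable: "summable f"
    unfolding f_def by (rule summable_moment_series[OF assms])
  have sums: "(\<lambda>n. z ^ Suc m * fact m * (real ((n + m) choose m) * z ^ n))
      sums (z ^ Suc m * fact m * (1 / (1 - z) ^ Suc m))"
    by (intro sums_mult binomial_power_series_sums assms)
  have le: "z ^ Suc m * fact m * (real ((n + m) choose m) * z ^ n) \<le> f (n + Suc m)" for n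
  proof -
    have "((n + m) choose m) * fact m \<le> (n + m) ^ m"
      by (rule binomial_fact_pow)
    also have "\<dots> \<le> (n + Suc m) ^ m"
      by (rule power_mono) auto
    finally have "real ((n + m) choose m) * fact m \<le> real (n + Suc m) ^ m"
      by (metis of_nat_fact of_nat_le_iff of_nat_mult of_nat_power)
    then have "(real ((n + m) choose m) * fact m) * z ^ (n + Suc m) \<le> real (n + Suc m) ^ m * z ^ (n + Suc m)"
      using assms by (intro mult_right_mono) auto
    then show ?thesis by (simp add: f_def power_add mult_ac)
  qed
  have "z ^ Suc m * fact m / (1 - z) ^ Suc m \<le> (\<Sum>n. f (n + Suc m))"
  proof -
    have "summable (\<lambda>n. f (n + Suc m))"
      using summable by (simp only: summable_iff_shift)
    then have "(\<Sum>n. z ^ Suc m * fact m * (real ((n + m) choose m) * z ^ n)) \<le> (\<Sum>n. f (n + Suc m))"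
      by (intro suminf_le sums_summable[OF sums] le)
    then show ?thesis using sums by (simp add: sums_iff)
  qed
  also have "\<dots> \<le> (\<Sum>n. f (n + Suc m)) + (\<Sum>i<Suc m. f i)"
    using assms by (simp add: f_def sum_nonneg)
  also have "\<dots> = moment_series {1..} m z"
    unfolding moment_series_def f_def[symmetric] by (rule suminf_split_initial_segment[OF summable, symmetric])
  finally show ?thesis .
qed

lemma power_le_fact_mult_exp:
  fixes x :: real
  assumes "0 \<le> x"
  shows "x ^ n \<le> fact n * exp x"
proof -
  have sums: "(\<lambda>k. x ^ k /\<^sub>R fact k) sums exp x"
    by (rule exp_converges)
  have "x ^ n /\<^sub>R fact n \<le> exp x"
    using sum_le_suminf[OF sums_summable[OF sums], of "{n}"] sums assms by (simp add: sums_iff)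
  then show ?thesis by (simp add: field_simps)
qed

lemma moment_series_exp_scaled_le:
  fixes u :: real
  assumes "A \<subseteq> {1..}" "0 < u"
  shows "u ^ Suc m * moment_series A m (exp (- u)) \<le> fact m * fact (Suc m) * exp 1"
proof -
  have z: "0 \<le> exp (- u)" "exp (- u) < 1" using assms by auto
  have "u \<le> (1 + u) * (1 - exp (- u))"
    using exp_ge_add_one_self[of u] by (simp add: exp_minus field_simps)
  then have ratio: "u / (1 - exp (- u)) \<le> 1 + u"
    using z by (simp add: divide_le_eq)
  have "u ^ Suc m * moment_series A m (exp (- u)) \<le> u ^ Suc m * moment_series {1..} m (exp (- u))"
    using assms by (intro mult_left_mono moment_series_mono z) auto
  also have "\<dots> \<le> u ^ Suc m * (exp (- u) * fact m / (1 - exp (- u)) ^ Suc m)"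
    using assms by (intro mult_left_mono moment_series_atLeast1_le z) auto
  also have "\<dots> = fact m * exp (- u) * (u / (1 - exp (- u))) ^ Suc m"
    by (simp add: power_divide)
  also have "\<dots> \<le> fact m * exp (- u) * (1 + u) ^ Suc m"
    using ratio assms z by (intro mult_left_mono power_mono) auto
  also have "\<dots> \<le> fact m * exp (- u) * (fact (Suc m) * exp (1 + u))"
    using assms by (intro mult_left_mono power_le_fact_mult_exp) auto
  also have "\<dots> = fact m * fact (Suc m) * exp 1"
    by (simp add: exp_add exp_minus field_simps)
  finally show ?thesis .
qed

lemma moment_series_atLeast1_exp_tendsto:
  "((\<lambda>u. u ^ Suc m * moment_series {1..} m (exp (- u))) \<longlongrightarrow> fact m) (at_right 0)"
proof (rule tendsto_sandwich)
  define r where "r u = u / (1 - exp (- u))" for u :: real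
  have r: "(r \<longlongrightarrow> 1) (at_right 0)"
    unfolding r_def by real_asymp
  show "\<forall>\<^sub>F u in at_right 0. fact m * exp (- u) ^ Suc m * r u ^ Suc m
      \<le> u ^ Suc m * moment_series {1..} m (exp (- u))"
    using eventually_at_right_less[of 0]
  proof eventually_elim
    case (elim u)
    have "fact m * exp (- u) ^ Suc m * r u ^ Suc m
        = u ^ Suc m * (exp (- u) ^ Suc m * fact m / (1 - exp (- u)) ^ Suc m)"
      by (simp add: r_def power_divide)
    also have "\<dots> \<le> u ^ Suc m * moment_series {1..} m (exp (- u))"
      using elim by (intro mult_left_mono moment_series_atLeast1_ge) auto
    finally show ?case .
  qed
  show "\<forall>\<^sub>F u in at_right 0. u ^ Suc m * moment_series {1..} m (exp (- u))
      \<le> fact m * exp (- u) * r u ^ Suc m"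
    using eventually_at_right_less[of 0]
  proof eventually_elim
    case (elim u)
    have "u ^ Suc m * moment_series {1..} m (exp (- u))
        \<le> u ^ Suc m * (exp (- u) * fact m / (1 - exp (- u)) ^ Suc m)"
      using elim by (intro mult_left_mono moment_series_atLeast1_le) auto
    also have "\<dots> = fact m * exp (- u) * r u ^ Suc m"
      by (simp add: r_def power_divide)
    finally show ?case .
  qed
  have "((\<lambda>u. fact m * exp (- u) ^ Suc m * r u ^ Suc m) \<longlongrightarrow> fact m * exp (- 0) ^ Suc m * 1 ^ Suc m) (at_right 0)"
    by (intro tendsto_intros r)
  then show "((\<lambda>u. fact m * exp (- u) ^ Suc m * r u ^ Suc m) \<longlongrightarrow> fact m) (at_right 0)"
    by simp
  have "((\<lambda>u. fact m * exp (- u) * r u ^ Suc m) \<longlongrightarrow> fact m * exp (- 0) * 1 ^ Suc m) (at_right 0)"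
    by (intro tendsto_intros r)
  then show "((\<lambda>u. fact m * exp (- u) * r u ^ Suc m) \<longlongrightarrow> fact m) (at_right 0)"
    by simp
qed

section \<open>An Abelian theorem\<close>

lemma linear_bound_of_tendsto_zero:
  fixes x :: "nat \<Rightarrow> real"
  assumes "(\<lambda>n. x n / real n) \<longlonglongrightarrow> 0" "0 < \<epsilon>"
  shows "\<exists>M\<ge>0. \<forall>n. \<bar>x n\<bar> \<le> M + \<epsilon> * real n"
proof -
  obtain N where N: "\<And>n. n \<ge> N \<Longrightarrow> \<bar>x n / real n\<bar> < \<epsilon>"
    using assms unfolding LIMSEQ_def dist_real_def by auto
  define M where "M = (\<Sum>n\<le>N. \<bar>x n\<bar>)"
  have "0 \<le> M"
    unfolding M_def by (intro sum_nonneg) auto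
  moreover have "\<bar>x n\<bar> \<le> M + \<epsilon> * real n" for n
  proof (cases "n \<le> N")
    case True
    then have "\<bar>x n\<bar> \<le> M"
      unfolding M_def by (intro member_le_sum) auto
    then show ?thesis
      using assms(2) by (simp add: add_increasing2)
  next
    case False
    then have "\<bar>x n\<bar> < \<epsilon> * real n"
      using N[of n] by (simp add: abs_divide divide_less_eq)
    then show ?thesis
      using \<open>0 \<le> M\<close> by simp
  qed
  ultimately show ?thesis
    by blast
qed

lemma sum_mult_power_by_parts:
  fixes b :: "nat \<Rightarrow> real"
  shows "(\<Sum>j\<le>n. b j * real j ^ m) = (\<Sum>j\<le>n. b j) * real n ^ m
     - (\<Sum>j<n. (\<Sum>i\<le>j. b i) * (real (Suc j) ^ m - real j ^ m))"
  by (induction n) (simp_all add: algebra_simps)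

lemma sum_mult_power_le_of_partial_sums_le:
  fixes b :: "nat \<Rightarrow> real"
  assumes partial: "\<And>n. \<bar>\<Sum>j\<le>n. b j\<bar> \<le> M + \<epsilon> * real n" and "0 \<le> \<epsilon>"
  shows "\<bar>\<Sum>j\<le>n. b j * real j ^ m\<bar> \<le> 2 * (M + \<epsilon> * real n) * real n ^ m"
proof -
  define R where "R n = (\<Sum>j\<le>n. b j)" for n
  define K where "K j = real (Suc j) ^ m - real j ^ m" for j
  have K: "0 \<le> K j" for j
    unfolding K_def by (simp add: power_mono)
  have R: "\<bar>R j\<bar> \<le> M + \<epsilon> * real n" if "j \<le> n" for j
    using partial[of j] mult_left_mono[OF of_nat_mono[OF that] assms(2)] unfolding R_def
    by linarith
  have "\<bar>\<Sum>j\<le>n. b j * real j ^ m\<bar> \<le> \<bar>R n\<bar> * real n ^ m + (\<Sum>j<n. \<bar>R j\<bar> * K j)"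
    unfolding sum_mult_power_by_parts R_def[symmetric] K_def[symmetric]
    using sum_abs[of "\<lambda>j. R j * K j" "{..<n}"] K by (simp add: abs_mult abs_triangle_ineq4 order_trans[OF abs_triangle_ineq4])
  also have "\<dots> \<le> (M + \<epsilon> * real n) * real n ^ m + (\<Sum>j<n. (M + \<epsilon> * real n) * K j)"
    using R K by (intro add_mono mult_right_mono sum_mono) auto
  also have "(\<Sum>j<n. K j) = real n ^ m - real 0 ^ m"
    unfolding K_def by (rule sum_lessThan_telescope)
  then have "(\<Sum>j<n. (M + \<epsilon> * real n) * K j) \<le> (M + \<epsilon> * real n) * real n ^ m"
    using R[of n] by (cases m) (auto simp: sum_distrib_left[symmetric] intro: mult_left_mono)
  finally show ?thesis by (simp add: algebra_simps)
qed

lemma partial_sums_power_series_sums: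
  fixes a :: "nat \<Rightarrow> real" and z :: real
  assumes "0 \<le> z" "z < 1" "summable (\<lambda>j. \<bar>a j\<bar> * z ^ j)"
  shows "(\<lambda>n. (\<Sum>j\<le>n. a j) * z ^ n) sums ((\<Sum>j. a j * z ^ j) / (1 - z))"
proof -
  have "summable (\<lambda>j. norm (a j * z ^ j))"
    using assms by (simp add: abs_mult)
  moreover have "summable (\<lambda>j. norm (z ^ j))"
    using assms by (simp add: summable_geometric)
  ultimately have "(\<lambda>n. \<Sum>i\<le>n. (a i * z ^ i) * z ^ (n - i)) sums ((\<Sum>j. a j * z ^ j) * (\<Sum>j. z ^ j))"
    by (rule Cauchy_product_sums)
  moreover have "(\<Sum>i\<le>n. (a i * z ^ i) * z ^ (n - i)) = (\<Sum>j\<le>n. a j) * z ^ n" for n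
    unfolding sum_distrib_right by (intro sum.cong refl) (simp add: mult.assoc flip: power_add)
  moreover have "(\<Sum>j. z ^ j) = 1 / (1 - z)"
    using geometric_sums[of z] assms by (simp add: sums_iff)
  ultimately show ?thesis by simp
qed

lemma power_series_le_of_partial_sums_le:
  fixes a :: "nat \<Rightarrow> real" and z :: real
  assumes z: "0 \<le> z" "z < 1" and summable: "summable (\<lambda>j. \<bar>a j\<bar> * z ^ j)"
    and partial: "\<And>n. \<bar>\<Sum>j\<le>n. a j\<bar> \<le> C * real n ^ m + \<epsilon> * real n ^ Suc m"
    and "0 \<le> C" "0 \<le> \<epsilon>"
  shows "\<bar>\<Sum>j. a j * z ^ j\<bar> \<le> C * fact m / (1 - z) ^ m + \<epsilon> * fact (Suc m) / (1 - z) ^ Suc m"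
proof -
  define Q where "Q n = (\<Sum>j\<le>n. a j)" for n
  define G where "G k = (\<lambda>n. real n ^ k * z ^ n)" for k
  have G: "summable (G k)" "suminf (G k) \<le> fact k / (1 - z) ^ Suc k" for k
    unfolding G_def using power_mult_geometric_series[OF z] by auto
  have le: "\<bar>Q n * z ^ n\<bar> \<le> C * G m n + \<epsilon> * G (Suc m) n" for n
    using mult_right_mono[OF partial[of n], of "z ^ n"] z
    by (simp add: Q_def G_def abs_mult algebra_simps)
  have summable_bound: "summable (\<lambda>n. C * G m n + \<epsilon> * G (Suc m) n)"
    by (intro summable_add summable_mult G)
  have "\<bar>(\<Sum>j. a j * z ^ j) / (1 - z)\<bar> = \<bar>\<Sum>n. Q n * z ^ n\<bar>"
    using partial_sums_power_series_sums[OF z summable] by (simp add: Q_def sums_iff)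
  also have "\<dots> \<le> (\<Sum>n. C * G m n + \<epsilon> * G (Suc m) n)"
    using norm_suminf_le[of "\<lambda>n. Q n * z ^ n", OF _ summable_bound] le by simp
  also have "\<dots> = C * suminf (G m) + \<epsilon> * suminf (G (Suc m))"
    using G by (simp add: suminf_add[symmetric] suminf_mult[symmetric] summable_mult)
  also have "\<dots> \<le> C * (fact m / (1 - z) ^ Suc m) + \<epsilon> * (fact (Suc m) / (1 - z) ^ Suc (Suc m))"
    using assms by (intro add_mono mult_left_mono G) auto
  finally have "\<bar>\<Sum>j. a j * z ^ j\<bar>
      \<le> (1 - z) * (C * (fact m / (1 - z) ^ Suc m) + \<epsilon> * (fact (Suc m) / (1 - z) ^ Suc (Suc m)))"
    using z by (simp add: divide_le_eq mult.commute)
  moreover have "(1 - z) * (x / (1 - z) ^ Suc k) = x / (1 - z) ^ k" for x k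
    using z by (simp add: field_simps)
  ultimately show ?thesis
    by (simp only: distrib_left mult.left_commute[of "1 - z"]) simp
qed

lemma scaled_weighted_exp_series_le:
  fixes b :: "nat \<Rightarrow> real" and u :: real
  assumes bounded: "\<And>j. \<bar>b j\<bar> \<le> B"
    and partial: "\<And>n. \<bar>\<Sum>j\<le>n. b j\<bar> \<le> M + \<epsilon> * real n"
    and "0 \<le> M" "0 \<le> \<epsilon>" "0 < u"
  shows "\<bar>u ^ Suc m * (\<Sum>j. b j * real j ^ m * exp (- u) ^ j)\<bar>
    \<le> 2 * M * fact m * u * (u / (1 - exp (- u))) ^ m
      + 2 * \<epsilon> * fact (Suc m) * (u / (1 - exp (- u))) ^ Suc m"
proof -
  define z where "z = exp (- u)"
  have z: "0 \<le> z" "z < 1"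
    using \<open>0 < u\<close> by (auto simp: z_def)
  have "summable (\<lambda>j. B * (real j ^ m * z ^ j))"
    by (intro summable_mult power_mult_geometric_series(1)[OF z])
  then have summable: "summable (\<lambda>j. \<bar>b j * real j ^ m\<bar> * z ^ j)"
  proof (rule summable_comparison_test')
    fix j
    have "\<bar>b j\<bar> * (real j ^ m * z ^ j) \<le> B * (real j ^ m * z ^ j)"
      using bounded z by (intro mult_right_mono) auto
    then show "norm (\<bar>b j * real j ^ m\<bar> * z ^ j) \<le> B * (real j ^ m * z ^ j)"
      using z by (simp add: abs_mult mult.assoc)
  qed
  have "\<bar>\<Sum>j\<le>n. b j * real j ^ m\<bar> \<le> (2 * M) * real n ^ m + (2 * \<epsilon>) * real n ^ Suc m" for n
    using sum_mult_power_le_of_partial_sums_le[OF partial \<open>0 \<le> \<epsilon>\<close>, where n = n and m = m]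
    by (simp add: algebra_simps)
  then have "\<bar>\<Sum>j. b j * real j ^ m * z ^ j\<bar>
      \<le> 2 * M * fact m / (1 - z) ^ m + 2 * \<epsilon> * fact (Suc m) / (1 - z) ^ Suc m"
    using power_series_le_of_partial_sums_le[OF z summable] assms by simp
  then have "\<bar>u ^ Suc m * (\<Sum>j. b j * real j ^ m * z ^ j)\<bar>
      \<le> u ^ Suc m * (2 * M * fact m / (1 - z) ^ m + 2 * \<epsilon> * fact (Suc m) / (1 - z) ^ Suc m)"
    using \<open>0 < u\<close> by (simp add: abs_mult mult_left_mono)
  also have "\<dots> = 2 * M * fact m * u * (u / (1 - z)) ^ m + 2 * \<epsilon> * fact (Suc m) * (u / (1 - z)) ^ Suc m"
    by (simp add: power_divide distrib_left mult_ac del: fact_Suc)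
  finally show ?thesis
    by (simp add: z_def)
qed

lemma abelian_error_tendsto_zero:
  fixes b :: "nat \<Rightarrow> real"
  assumes bounded: "\<And>j. \<bar>b j\<bar> \<le> B"
    and small: "(\<lambda>n. (\<Sum>j\<le>n. b j) / real n) \<longlonglongrightarrow> 0"
  shows "((\<lambda>u. u ^ Suc m * (\<Sum>j. b j * real j ^ m * exp (- u) ^ j)) \<longlongrightarrow> 0) (at_right 0)"
proof (rule tendstoI)
  fix e :: real
  assume "0 < e"
  define \<epsilon> where "\<epsilon> = e / (4 * fact (Suc m))"
  have "0 < \<epsilon>"
    using \<open>0 < e\<close> by (simp add: \<epsilon>_def)
  then obtain M where "0 \<le> M" and M: "\<And>n. \<bar>\<Sum>j\<le>n. b j\<bar> \<le> M + \<epsilon> * real n"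
    using linear_bound_of_tendsto_zero[OF small] by blast
  define r where "r u = u / (1 - exp (- u))" for u :: real
  define bound where
    "bound u = 2 * M * fact m * u * r u ^ m + 2 * \<epsilon> * fact (Suc m) * r u ^ Suc m" for u
  have "(r \<longlongrightarrow> 1) (at_right 0)"
    unfolding r_def by real_asymp
  then have "(bound \<longlongrightarrow> 2 * M * fact m * 0 * 1 ^ m + 2 * \<epsilon> * fact (Suc m) * 1 ^ Suc m) (at_right 0)"
    unfolding bound_def by (intro tendsto_intros)
  moreover have "2 * M * fact m * 0 * 1 ^ m + 2 * \<epsilon> * fact (Suc m) * 1 ^ Suc m < e"
    using \<open>0 < e\<close> by (simp add: \<epsilon>_def)
  ultimately have "\<forall>\<^sub>F u in at_right 0. bound u < e"
    by (rule order_tendstoD)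
  moreover have "\<forall>\<^sub>F u in at_right 0.
      \<bar>u ^ Suc m * (\<Sum>j. b j * real j ^ m * exp (- u) ^ j)\<bar> \<le> bound u"
    using eventually_at_right_less[of 0]
    by eventually_elim
      (use scaled_weighted_exp_series_le[OF bounded M \<open>0 \<le> M\<close>] \<open>0 < \<epsilon>\<close> in
        \<open>simp add: bound_def r_def\<close>)
  ultimately show "\<forall>\<^sub>F u in at_right 0.
      dist (u ^ Suc m * (\<Sum>j. b j * real j ^ m * exp (- u) ^ j)) 0 < e"
    by eventually_elim simp
qed

lemma sum_atMost_indicator:
  fixes n :: nat
  shows "(\<Sum>j\<le>n. indicator B j :: real) = real (card ({..n} \<inter> B))"
proof -
  have "(\<Sum>j\<le>n. indicator B j :: real) = (\<Sum>j\<in>{..n} \<inter> B. 1)"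
    by (subst sum.inter_restrict) (auto simp: indicator_def of_bool_def)
  then show ?thesis by simp
qed

lemma moment_series_exp_tendsto_density:
  assumes A: "A \<subseteq> {1..}"
    and density: "(\<lambda>n. real (card (A \<inter> {1..n})) / real n) \<longlonglongrightarrow> d"
  shows "((\<lambda>u. u ^ Suc m * moment_series A m (exp (- u))) \<longlongrightarrow> d * fact m) (at_right 0)"
proof -
  define b where "b j = indicator A j - d * indicator {1..} j" for j :: nat
  have bounded: "\<bar>b j\<bar> \<le> 1 + \<bar>d\<bar>" for j
    by (auto simp: b_def indicator_def)
  have "{..n} \<inter> A = A \<inter> {1..n}" "{..n} \<inter> {1..} = {1..n}" for n
    using A by auto
  then have partial: "(\<Sum>j\<le>n. b j) = real (card (A \<inter> {1..n})) - d * real n" for n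
    by (simp add: b_def sum_subtractf sum_distrib_left[symmetric] sum_atMost_indicator)
  have "\<forall>\<^sub>F n in sequentially. real (card (A \<inter> {1..n})) / real n - d = (\<Sum>j\<le>n. b j) / real n"
    using eventually_gt_at_top[of 0] by eventually_elim (simp add: partial diff_divide_distrib)
  moreover have "(\<lambda>n. real (card (A \<inter> {1..n})) / real n - d) \<longlonglongrightarrow> 0"
    using tendsto_diff[OF density tendsto_const[of d]] by simp
  ultimately have small: "(\<lambda>n. (\<Sum>j\<le>n. b j) / real n) \<longlonglongrightarrow> 0"
    by (rule Lim_transform_eventually[rotated])
  have "\<forall>\<^sub>F u in at_right 0. d * (u ^ Suc m * moment_series {1..} m (exp (- u)))
      + u ^ Suc m * (\<Sum>j. b j * real j ^ m * exp (- u) ^ j) = u ^ Suc m * moment_series A m (exp (- u))"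
    using eventually_at_right_less[of 0]
  proof eventually_elim
    case (elim u)
    have z: "0 \<le> exp (- u)" "exp (- u) < 1" using elim by auto
    have "moment_series A m (exp (- u))
        = d * moment_series {1..} m (exp (- u)) + (\<Sum>j. b j * real j ^ m * exp (- u) ^ j)"
      using suminf_diff[OF summable_moment_series[OF z, of A m]
          summable_mult[OF summable_moment_series[OF z, of "{1..}" m], of d]]
        suminf_mult[OF summable_moment_series[OF z, of "{1..}" m], of d]
      by (simp add: moment_series_def b_def left_diff_distrib mult.assoc)
    then show ?case by (simp add: algebra_simps)
  qed
  moreover have "((\<lambda>u. d * (u ^ Suc m * moment_series {1..} m (exp (- u)))
      + u ^ Suc m * (\<Sum>j. b j * real j ^ m * exp (- u) ^ j)) \<longlongrightarrow> d * fact m + 0) (at_right 0)"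
    by (intro tendsto_intros moment_series_atLeast1_exp_tendsto abelian_error_tendsto_zero[OF bounded small])
  ultimately show ?thesis
    by (simp add: Lim_transform_eventually)
qed

section \<open>Expansion and termwise differentiation of the fulcrum\<close>

lemma series_has_real_derivative:
  fixes g :: "nat \<Rightarrow> nat \<Rightarrow> real \<Rightarrow> real"
  assumes deriv: "\<And>n m s. s < 0 \<Longrightarrow> (g n m has_real_derivative g n (Suc m) s) (at s)"
    and bound: "\<And>m \<delta>. 0 < \<delta> \<Longrightarrow> \<exists>M. summable M \<and> (\<forall>n s. s \<le> - \<delta> \<longrightarrow> \<bar>g n m s\<bar> \<le> M n)"
    and "s < 0"
  shows "summable (\<lambda>n. g n m s)"
    and "((\<lambda>s. \<Sum>n. g n m s) has_real_derivative (\<Sum>n. g n (Suc m) s)) (at s)"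
proof -
  define \<delta> where "\<delta> = - s / 2"
  have "0 < \<delta>" "s \<le> - \<delta>"
    using \<open>s < 0\<close> by (auto simp: \<delta>_def)
  obtain M where M: "summable M" "\<And>n x. x \<le> - \<delta> \<Longrightarrow> \<bar>g n m x\<bar> \<le> M n"
    using bound[OF \<open>0 < \<delta>\<close>, of m] by blast
  obtain M' where M': "summable M'" "\<And>n x. x \<le> - \<delta> \<Longrightarrow> \<bar>g n (Suc m) x\<bar> \<le> M' n"
    using bound[OF \<open>0 < \<delta>\<close>, of "Suc m"] by blast
  define S where "S = {..< - \<delta>}"
  show summable: "summable (\<lambda>n. g n m s)"
    using M(2)[OF \<open>s \<le> - \<delta>\<close>] by (intro summable_comparison_test'[OF M(1)]) simp
  have uniform: "uniformly_convergent_on S (\<lambda>n x. \<Sum>i<n. g i (Suc m) x)"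
    using M'(2) by (intro Weierstrass_m_test'[OF _ M'(1)]) (auto simp: S_def)
  have deriv_within: "(g n m has_field_derivative g n (Suc m) x) (at x within S)" if "x \<in> S" for n x
    using deriv[of x] that \<open>0 < \<delta>\<close> by (auto simp: S_def intro: has_field_derivative_at_within)
  have "convex S" "s \<in> S" "s \<in> interior S"
    using \<open>s < 0\<close> by (auto simp: S_def \<delta>_def interior_open)
  then show "((\<lambda>s. \<Sum>n. g n m s) has_real_derivative (\<Sum>n. g n (Suc m) s)) (at s)"
    using has_field_derivative_series'(2)[where f = "\<lambda>n. g n m" and f' = "\<lambda>n. g n (Suc m)",
        OF _ deriv_within uniform _ summable]
    by blast
qed

lemma higher_deriv_series:
  fixes g :: "nat \<Rightarrow> nat \<Rightarrow> real \<Rightarrow> real"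
  assumes deriv: "\<And>n m s. s < 0 \<Longrightarrow> (g n m has_real_derivative g n (Suc m) s) (at s)"
    and bound: "\<And>m \<delta>. 0 < \<delta> \<Longrightarrow> \<exists>M. summable M \<and> (\<forall>n s. s \<le> - \<delta> \<longrightarrow> \<bar>g n m s\<bar> \<le> M n)"
    and F: "\<And>s. s < 0 \<Longrightarrow> F s = (\<Sum>n. g n 0 s)"
    and "s < 0"
  shows "(deriv ^^ m) F s = (\<Sum>n. g n m s)"
  using \<open>s < 0\<close>
proof (induction m arbitrary: s)
  case 0
  then show ?case using F by simp
next
  case (Suc m)
  have "((deriv ^^ m) F has_real_derivative (\<Sum>n. g n (Suc m) s)) (at s)"
  proof (rule has_field_derivative_transform_within_open)
    show "((\<lambda>s. \<Sum>n. g n m s) has_real_derivative (\<Sum>n. g n (Suc m) s)) (at s)"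
      by (rule series_has_real_derivative(2)[where g = g, OF deriv bound Suc.prems])
    show "(\<Sum>n. g n m x) = (deriv ^^ m) F x" if "x \<in> {..<0}" for x
      using Suc.IH that by simp
  qed (use Suc.prems in auto)
  then show ?case
    by (simp add: DERIV_imp_deriv)
qed

lemma suminf_swap_nonneg:
  fixes t :: "nat \<Rightarrow> nat \<Rightarrow> real"
  assumes nonneg: "\<And>j k. 0 \<le> t j k"
    and summable_inner: "\<And>k. summable (\<lambda>j. t j k)"
    and summable_outer: "summable (\<lambda>k. \<Sum>j. t j k)"
  shows "(\<lambda>j. \<Sum>k. t j k) sums (\<Sum>k. \<Sum>j. t j k)"
proof -
  define S where "S = (\<Sum>k. \<Sum>j. t j k)"
  have inner: "((\<lambda>j. t j k) has_sum (\<Sum>j. t j k)) UNIV" for k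
    using nonneg by (intro sums_nonneg_imp_has_sum summable_sums summable_inner)
  have outer: "((\<lambda>k. \<Sum>j. t j k) has_sum S) UNIV"
    unfolding S_def using nonneg summable_inner
    by (intro sums_nonneg_imp_has_sum summable_sums summable_outer suminf_nonneg)
  have "(\<lambda>(k, j). t j k) summable_on UNIV \<times> UNIV"
    using inner outer nonneg by (intro summable_on_SigmaI) (auto simp: summable_on_def)
  then have "((\<lambda>(k, j). t j k) has_sum S) (UNIV \<times> UNIV)"
    using inner outer by (intro has_sum_SigmaI) auto
  then have swapped: "((\<lambda>(j, k). t j k) has_sum S) (UNIV \<times> UNIV)"
    by (subst has_sum_swap) simp
  have "t j summable_on UNIV" for j
    using swapped by (intro summable_on_SigmaD1[of t UNIV "\<lambda>_. UNIV"]) (auto simp: summable_on_def)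
  then have "summable (\<lambda>k. t j k)" for j
    by (simp add: summable_on_imp_summable)
  then have "((\<lambda>k. t j k) has_sum (\<Sum>k. t j k)) UNIV" for j
    using nonneg by (intro sums_nonneg_imp_has_sum summable_sums)
  then have "((\<lambda>j. \<Sum>k. t j k) has_sum S) UNIV"
    by (intro has_sum_SigmaD[OF swapped]) auto
  then show ?thesis
    unfolding S_def by (rule has_sum_imp_sums)
qed

lemma minus_ln_one_minus_sums:
  fixes y :: real
  assumes "0 \<le> y" "y < 1"
  shows "(\<lambda>k. y ^ Suc k / real (Suc k)) sums (- ln (1 - y))"
proof -
  have "(\<lambda>k. - (y ^ k / real k)) sums ln (1 - y)"
    using Complex_Transcendental.ln_series'[of "- y"] assms by simp
  then have "(\<lambda>k. y ^ k / real k) sums (- ln (1 - y))"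
    using sums_minus by fastforce
  then show ?thesis
    by (subst sums_Suc_iff) simp
qed

lemma moment_series_exp_has_real_derivative:
  assumes "s < 0"
  shows "((\<lambda>s. moment_series A m (exp s)) has_real_derivative moment_series A (Suc m) (exp s)) (at s)"
proof -
  define g where "g j m s = indicator A j * real j ^ m * exp s ^ j" for j m and s :: real
  have deriv: "(g j m has_real_derivative g j (Suc m) s) (at s)" for j m s
  proof -
    have "g j m = (\<lambda>s. indicator A j * real j ^ m * exp (s * real j))"
      by (simp add: fun_eq_iff g_def flip: exp_of_nat2_mult)
    moreover have "g j (Suc m) s = indicator A j * real j ^ m * (exp (s * real j) * real j)"
      by (simp add: g_def mult_ac flip: exp_of_nat2_mult)
    ultimately show ?thesis
      by (auto intro!: derivative_eq_intros)
  qed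
  have bound: "\<exists>M. summable M \<and> (\<forall>j s. s \<le> - \<delta> \<longrightarrow> \<bar>g j m s\<bar> \<le> M j)" if "0 < \<delta>" for m \<delta>
  proof (intro exI conjI allI impI)
    show "summable (\<lambda>j. real j ^ m * exp (- \<delta>) ^ j)"
      by (intro power_mult_geometric_series(1)) (use that in auto)
    fix j s
    assume "s \<le> - \<delta>"
    then have "exp s ^ j \<le> exp (- \<delta>) ^ j"
      by (intro power_mono) auto
    then show "\<bar>g j m s\<bar> \<le> real j ^ m * exp (- \<delta>) ^ j"
      by (auto simp: g_def indicator_def abs_mult intro: mult_left_mono)
  qed
  show ?thesis
    using series_has_real_derivative(2)[where g = g, OF deriv bound assms]
    by (simp add: g_def moment_series_def)
qed

(* The m-th derivative of the term (1/(k+1)) sum_{j in A} exp ((k+1) j s) in the expansion of the fulcrum. *)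
definition fulcrum_term :: "nat set \<Rightarrow> nat \<Rightarrow> nat \<Rightarrow> real \<Rightarrow> real" where
  "fulcrum_term A m k s = real (Suc k) ^ m / real (Suc k) * moment_series A m (exp (s * real (Suc k)))"

lemma fulcrum_term_has_real_derivative:
  assumes "s < 0"
  shows "(fulcrum_term A m k has_real_derivative fulcrum_term A (Suc m) k s) (at s)"
proof -
  define c where "c = real (Suc k)"
  have "s * c < 0"
    using assms by (simp add: c_def mult_neg_pos)
  have "((\<lambda>s. moment_series A m (exp s)) has_real_derivative
      moment_series A (Suc m) (exp (s * c))) (at (s * c))"
    by (rule moment_series_exp_has_real_derivative[OF \<open>s * c < 0\<close>])
  moreover have "((\<lambda>s. s * c) has_real_derivative c) (at s)"
    by (auto intro!: derivative_eq_intros)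
  ultimately have "((\<lambda>s. moment_series A m (exp (s * c))) has_real_derivative
      moment_series A (Suc m) (exp (s * c)) * c) (at s)"
    by (rule DERIV_chain2)
  then have "((\<lambda>s. c ^ m / c * moment_series A m (exp (s * c))) has_real_derivative
      c ^ m / c * (moment_series A (Suc m) (exp (s * c)) * c)) (at s)"
    by (rule DERIV_cmult)
  moreover have "c ^ m / c * (X * c) = c ^ Suc m / c * X" for X
    by (simp add: c_def)
  ultimately show ?thesis
    unfolding fulcrum_term_def c_def[symmetric] by simp
qed

lemma scaled_fulcrum_term:
  assumes "0 < x"
  shows "x ^ Suc m * fulcrum_term A m k (- x)
    = (x * real (Suc k)) ^ Suc m * moment_series A m (exp (- (x * real (Suc k)))) / real (Suc k) ^ 2"
proof -
  define c where "c = real (Suc k)"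
  have "c ^ m / c = c ^ Suc m / c ^ 2"
    by (simp add: c_def power2_eq_square)
  then show ?thesis
    unfolding fulcrum_term_def c_def[symmetric] by (simp add: power_mult_distrib mult_ac)
qed

lemma summable_inverse_Suc_square: "summable (\<lambda>k. 1 / real (Suc k) ^ 2)"
proof -
  have "summable (\<lambda>n. 1 / real n ^ 2)"
    using inverse_power_summable[of 2, where 'a = real] by (simp add: divide_inverse)
  then show ?thesis
    using summable_Suc_iff[where f = "\<lambda>n. 1 / real n ^ 2"] by simp
qed

lemma fulcrum_term_bound:
  assumes A: "A \<subseteq> {1..}" and "0 < \<delta>" "s \<le> - \<delta>"
  shows "\<bar>fulcrum_term A m k s\<bar> \<le> fact m * fact (Suc m) * exp 1 / \<delta> ^ Suc m * (1 / real (Suc k) ^ 2)"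
proof -
  define c where "c = real (Suc k)"
  define x where "x = - s"
  define B where "B = fact m * fact (Suc m) * exp (1 :: real)"
  have "0 < c" "0 < x" "\<delta> \<le> x" "- x = s"
    using assms by (auto simp: c_def x_def)
  then have "0 < x * c"
    by simp
  have "0 \<le> (x * c) ^ Suc m * moment_series A m (exp (- (x * c)))"
    using \<open>0 < x * c\<close> by (intro mult_nonneg_nonneg moment_series_nonneg) auto
  moreover have "(x * c) ^ Suc m * moment_series A m (exp (- (x * c))) \<le> B"
    unfolding B_def by (rule moment_series_exp_scaled_le[OF A \<open>0 < x * c\<close>])
  ultimately have "\<bar>x ^ Suc m * fulcrum_term A m k s\<bar> \<le> B / c ^ 2"
    using scaled_fulcrum_term[OF \<open>0 < x\<close>, of m A k, unfolded \<open>- x = s\<close> c_def[symmetric]] \<open>0 < c\<close>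
    by (simp add: divide_right_mono)
  then have "\<bar>fulcrum_term A m k s\<bar> * x ^ Suc m \<le> B / c ^ 2"
    using \<open>0 < x\<close> by (simp add: abs_mult mult.commute)
  then have "\<bar>fulcrum_term A m k s\<bar> \<le> B / c ^ 2 / x ^ Suc m"
    using \<open>0 < x\<close> by (subst pos_le_divide_eq) auto
  also have "\<dots> \<le> B / c ^ 2 / \<delta> ^ Suc m"
    using assms \<open>\<delta> \<le> x\<close> \<open>0 < c\<close> by (intro divide_left_mono power_mono mult_pos_pos) (auto simp: B_def)
  finally show ?thesis
    by (simp add: B_def c_def mult.commute)
qed

lemma fulcrum_term_dominated:
  assumes "A \<subseteq> {1..}" "0 < \<delta>"
  shows "\<exists>M. summable M \<and> (\<forall>k s. s \<le> - \<delta> \<longrightarrow> \<bar>fulcrum_term A m k s\<bar> \<le> M k)"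
  using fulcrum_term_bound[OF assms] summable_mult[OF summable_inverse_Suc_square] by blast

lemma summable_fulcrum_term:
  assumes A: "A \<subseteq> {1..}" and "s < 0"
  shows "summable (\<lambda>k. fulcrum_term A m k s)"
proof -
  have "0 < - s"
    using \<open>s < 0\<close> by simp
  then obtain M where M: "summable M" "\<And>k s'. s' \<le> - (- s) \<Longrightarrow> \<bar>fulcrum_term A m k s'\<bar> \<le> M k"
    using fulcrum_term_dominated[OF A] by blast
  show ?thesis
    by (rule summable_comparison_test'[OF M(1)]) (use M(2)[of s] in simp)
qed

lemma fulcrum_summand_sums:
  assumes "A \<subseteq> {1..}" "s < 0"
  shows "(\<lambda>k. indicator A j * exp (s * real (Suc k)) ^ j / real (Suc k))
    sums (- (if j \<in> A then ln (1 - exp (s * real j)) else 0))"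
proof (cases "j \<in> A")
  case True
  then have "0 \<le> exp (s * real j)" "exp (s * real j) < 1"
    using assms by (auto simp: mult_neg_pos)
  then have "(\<lambda>k. exp (s * real j) ^ Suc k / real (Suc k)) sums (- ln (1 - exp (s * real j)))"
    by (rule minus_ln_one_minus_sums)
  moreover have "exp (s * real j) ^ Suc k = exp (s * real (Suc k)) ^ j" for k
    unfolding exp_of_nat2_mult[symmetric] by (simp add: mult_ac)
  ultimately show ?thesis
    using True by simp
next
  case False
  then show ?thesis by simp
qed

lemma fulcrum_eq_suminf_fulcrum_term:
  assumes A: "A \<subseteq> {1..}" and "s < 0"
  shows "fulcrum A s = (\<Sum>k. fulcrum_term A 0 k s)"
proof -
  define t where "t j k = indicator A j * exp (s * real (Suc k)) ^ j / real (Suc k)" for j k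
  have nonneg: "0 \<le> t j k" for j k
    by (simp add: t_def)
  have inner: "(\<lambda>j. t j k) sums fulcrum_term A 0 k s" for k
  proof -
    have "0 \<le> exp (s * real (Suc k))" "exp (s * real (Suc k)) < 1"
      using \<open>s < 0\<close> by (auto simp: mult_neg_pos)
    from sums_divide[OF summable_sums[OF summable_moment_series[OF this, of A 0]], of "real (Suc k)"]
    show ?thesis
      by (simp add: t_def fulcrum_term_def moment_series_def)
  qed
  have inner_sum: "(\<Sum>j. t j k) = fulcrum_term A 0 k s" for k
    using inner by (simp add: sums_iff)
  have outer: "summable (\<lambda>k. \<Sum>j. t j k)"
    using summable_fulcrum_term[OF assms] by (simp add: inner_sum)
  have log: "(\<lambda>k. t j k) sums (- (if j \<in> A then ln (1 - exp (s * real j)) else 0))" for j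
    unfolding t_def by (rule fulcrum_summand_sums[OF assms])
  have "(\<lambda>j. \<Sum>k. t j k) sums (\<Sum>k. \<Sum>j. t j k)"
    by (rule suminf_swap_nonneg[OF nonneg sums_summable[OF inner] outer])
  moreover have "(\<Sum>k. t j k) = - (if j \<in> A then ln (1 - exp (s * real j)) else 0)" for j
    using log by (simp add: sums_iff)
  ultimately have "(\<lambda>j. if j \<in> A then ln (1 - exp (s * real j)) else 0) sums (- (\<Sum>k. \<Sum>j. t j k))"
    using sums_minus by fastforce
  then show ?thesis
    by (simp add: fulcrum_def sums_iff inner_sum)
qed

lemma higher_deriv_fulcrum:
  assumes "A \<subseteq> {1..}" "s < 0"
  shows "(deriv ^^ m) (fulcrum A) s = (\<Sum>k. fulcrum_term A m k s)"
  by (rule higher_deriv_series[OF fulcrum_term_has_real_derivative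
        fulcrum_term_dominated[OF assms(1)] fulcrum_eq_suminf_fulcrum_term[OF assms(1)] assms(2)])

section \<open>Asymptotics of the derivatives\<close>

lemma filterlim_mult_const_at_right_0:
  fixes c :: real
  assumes "0 < c"
  shows "filterlim (\<lambda>x. x * c) (at_right 0) (at_right 0)"
  unfolding filterlim_at
proof
  show "\<forall>\<^sub>F x in at_right 0. x * c \<in> {0<..} \<and> x * c \<noteq> 0"
    using eventually_at_right_less[of 0] by eventually_elim (use assms in auto)
  show "((\<lambda>x. x * c) \<longlongrightarrow> 0) (at_right 0)"
    by (intro tendsto_mult_left_zero tendsto_ident_at)
qed

lemma zeta_real_2: "zeta_real 2 = (\<Sum>k. 1 / real (Suc k) ^ 2)"
  unfolding zeta_real_def by simp

lemma scaled_fulcrum_term_tendsto: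
  assumes A: "A \<subseteq> {1..}"
    and density: "(\<lambda>n. real (card (A \<inter> {1..n})) / real n) \<longlonglongrightarrow> d"
  shows "((\<lambda>x. x ^ Suc m * fulcrum_term A m k (- x)) \<longlongrightarrow> d * fact m / real (Suc k) ^ 2) (at_right 0)"
proof -
  let ?c = "real (Suc k)"
  have "((\<lambda>x. (x * ?c) ^ Suc m * moment_series A m (exp (- (x * ?c)))) \<longlongrightarrow> d * fact m) (at_right 0)"
    using filterlim_compose[OF moment_series_exp_tendsto_density[OF A density]
        filterlim_mult_const_at_right_0[of ?c]] by simp
  then have "((\<lambda>x. (x * ?c) ^ Suc m * moment_series A m (exp (- (x * ?c))) / ?c ^ 2)
      \<longlongrightarrow> d * fact m / ?c ^ 2) (at_right 0)"
    by (intro tendsto_divide tendsto_const) auto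
  moreover have "\<forall>\<^sub>F x in at_right 0. (x * ?c) ^ Suc m * moment_series A m (exp (- (x * ?c))) / ?c ^ 2
      = x ^ Suc m * fulcrum_term A m k (- x)"
    using eventually_at_right_less[of 0] by eventually_elim (simp only: scaled_fulcrum_term)
  ultimately show ?thesis
    by (rule Lim_transform_eventually)
qed

lemma scaled_fulcrum_term_le:
  assumes "A \<subseteq> {1..}" "0 < x"
  shows "\<bar>x ^ Suc m * fulcrum_term A m k (- x)\<bar> \<le> fact m * fact (Suc m) * exp 1 * (1 / real (Suc k) ^ 2)"
proof -
  have "x ^ Suc m * \<bar>fulcrum_term A m k (- x)\<bar>
      \<le> x ^ Suc m * (fact m * fact (Suc m) * exp 1 / x ^ Suc m * (1 / real (Suc k) ^ 2))"
    using fulcrum_term_bound[OF assms, of "- x" m k] assms by (intro mult_left_mono) auto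
  then show ?thesis
    using assms by (simp add: abs_mult)
qed

lemma scaled_higher_deriv_fulcrum_tendsto:
  assumes A: "A \<subseteq> {1..}"
    and density: "(\<lambda>n. real (card (A \<inter> {1..n})) / real n) \<longlonglongrightarrow> d"
  shows "((\<lambda>x. x ^ Suc m * (deriv ^^ m) (fulcrum A) (- x)) \<longlongrightarrow> d * fact m * zeta_real 2) (at_right 0)"
proof -
  define a where "a k x = x ^ Suc m * fulcrum_term A m k (- x)" for k x
  define B where "B = fact m * fact (Suc m) * exp (1 :: real)"
  have limit: "((\<lambda>x. a k x) \<longlongrightarrow> d * fact m / real (Suc k) ^ 2) (at_right 0)" for k
    unfolding a_def by (rule scaled_fulcrum_term_tendsto[OF A density])
  have bound: "\<forall>\<^sub>F (k, x) in sequentially \<times>\<^sub>F at_right 0. norm (a k x) \<le> B * (1 / real (Suc k) ^ 2)"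
    unfolding eventually_prod_filter
  proof (intro exI conjI allI impI)
    show "eventually (\<lambda>_. True) sequentially"
      by simp
    show "\<forall>\<^sub>F x in at_right 0. 0 < (x :: real)"
      by (rule eventually_at_right_less)
  qed (use scaled_fulcrum_term_le[OF A] in \<open>auto simp: a_def B_def\<close>)
  have "summable (\<lambda>k. B * (1 / real (Suc k) ^ 2))"
    by (rule summable_mult[OF summable_inverse_Suc_square])
  moreover have "(\<Sum>k. d * fact m / real (Suc k) ^ 2) = d * fact m * zeta_real 2"
    using suminf_mult[OF summable_inverse_Suc_square, of "d * fact m"] by (simp add: zeta_real_2)
  ultimately have "((\<lambda>x. \<Sum>k. a k x) \<longlongrightarrow> d * fact m * zeta_real 2) (at_right 0)"
    using tannerys_theorem[OF limit bound] by simp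
  moreover have "\<forall>\<^sub>F x in at_right 0. (\<Sum>k. a k x) = x ^ Suc m * (deriv ^^ m) (fulcrum A) (- x)"
    using eventually_at_right_less[of 0]
    by eventually_elim (simp add: a_def higher_deriv_fulcrum[OF A] suminf_mult summable_fulcrum_term[OF A])
  ultimately show ?thesis
    by (rule Lim_transform_eventually)
qed

theorem proposition4p4:
  fixes A :: "nat set" and d :: real and m :: nat
  assumes "A \<subseteq> {1..}"
    and "(\<lambda>n. real (card (A \<inter> {1..n})) / real n) \<longlonglongrightarrow> d"
    and "d > 0"
  shows "(\<lambda>s. (deriv ^^ m) (fulcrum A) (- s)) \<sim>[at_right 0]
           (\<lambda>s. d * zeta_real 2 * Gamma (real m + 1) / s ^ (m + 1))"
proof (rule asymp_equivI')
  define L where "L = d * fact m * zeta_real 2"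
  have "0 < zeta_real 2"
    unfolding zeta_real_2 using summable_inverse_Suc_square by (intro suminf_pos) auto
  then have "0 < L"
    using assms(3) by (simp add: L_def)
  have "((\<lambda>x. x ^ Suc m * (deriv ^^ m) (fulcrum A) (- x) / L) \<longlongrightarrow> L / L) (at_right 0)"
    using scaled_higher_deriv_fulcrum_tendsto[OF assms(1,2)] \<open>0 < L\<close>
    by (intro tendsto_divide tendsto_const) (auto simp: L_def)
  moreover have "Gamma (real m + 1) = fact m"
    using Gamma_fact[of m] by (simp add: add.commute)
  then have "x ^ Suc m * (deriv ^^ m) (fulcrum A) (- x) / L
      = (deriv ^^ m) (fulcrum A) (- x) / (d * zeta_real 2 * Gamma (real m + 1) / x ^ (m + 1))" for x
    by (simp add: L_def mult_ac)
  ultimately show "((\<lambda>x. (deriv ^^ m) (fulcrum A) (- x) /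
      (d * zeta_real 2 * Gamma (real m + 1) / x ^ (m + 1))) \<longlongrightarrow> 1) (at_right 0)"
    using \<open>0 < L\<close> by simp
qed

end
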